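(* In the limit $n\to\infty$ with $k,l$ and $\xi=m/n$ fixed, the distribution $P_{n,n\xi,k,l}$ satisfies $P_{n,n\xi,k,l}=P_{R|\xi;k,l}+O(1/n)$, where $P_{R|\xi;k,l}:=B_{\xi,k-l}*B_{1-\xi,l}$. The limit distribution $P_{R|\xi;k,l}$ is a discrete probability distribution on $\{0,1,\dots,k\}$, with expectation $(k-l)\xi+l(1-\xi)$ and variance $k\xi(1-\xi)$.
   Context: Let $n,m,k,l$ be non-negative integers with $m,k,l\le n$ and $k-l,\ m-l,\ n-m-k+l\ge0$. On $(\mathbb{C}^2)^{\otimes n}$ let $\mathsf{P}_{(n-x,x)}$ be the projector onto the isotypic component $\mathcal{U}_{(n-x,x)}\boxtimes\mathcal{V}_{(n-x,x)}$ in the $\mathrm{SU}(2)$–$\mathfrak{S}_n$ Schur–Weyl decomposition ($\mathcal{V}_{(n-x,x)}$ the $\mathfrak{S}_n$-irrep of shape $(n-x,x)$). With $M=m-l$, $N=n-m-k+l$, let $|\Xi_{n,m|k,l}\rangle=|1\rangle^{\otimes l}\otimes|0\rangle^{\otimes(k-l)}\otimes|\Xi_{N+M,M}\rangle$, where $|\Xi_{N+M,M}\rangle$ is the normalized symmetric (Dicke) state on $N+M$ qubits with $M$ excitations. $P_{n,m,k,l}$ is the distribution on $\{0,\dots,\lfloor n/2\rfloor\}$ with pmf $p(x)=\langle\Xi_{n,m|k,l}|\mathsf{P}_{(n-x,x)}|\Xi_{n,m|k,l}\rangle$. $B_{\xi,j}$ denotes the binomial distribution on $\{0,1,\dots,j\}$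 with pmf $x\mapsto\binom{j}{x}\xi^x(1-\xi)^{j-x}$ ($0\le\xi\le1$, $j\in\mathbb{N}$), and $*$ is convolution of distributions. *)

theory Defs
  imports "HOL-Probability.Probability"
begin

text \<open>Vectors of (C^2)^{\<otimes>n} (all amplitudes below are real, so we work over the reals)
  are functions on bit strings of length n; True stands for |1>, False for |0>.\<close>

type_synonym qstate = "bool list \<Rightarrow> real"

definition basis_strings :: "nat \<Rightarrow> bool list set" where
  "basis_strings n = {bs. length bs = n}"

definition inner_q :: "nat \<Rightarrow> qstate \<Rightarrow> qstate \<Rightarrow> real" where
  "inner_q n \<phi> \<psi> = (\<Sum>bs\<in>basis_strings n. \<phi> bs * \<psi> bs)"

definition swap_op :: "nat \<Rightarrow> nat \<Rightarrow> qstate \<Rightarrow> qstate" where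
  "swap_op i j \<psi> = (\<lambda>bs. \<psi> (bs[i := bs ! j, j := bs ! i]))"

definition transp_sum :: "nat \<Rightarrow> qstate \<Rightarrow> qstate" where
  "transp_sum n \<psi> = (\<lambda>bs. \<Sum>(i,j)\<in>{(i,j). i < j \<and> j < n}. swap_op i j \<psi> bs)"

text \<open>Scalar by which the sum of transpositions acts on the S_n irrep of shape (n-x,x):
  the content sum of the Young diagram (n-x,x).\<close>
definition content_sum :: "nat \<Rightarrow> nat \<Rightarrow> real" where
  "content_sum n x = (\<Sum>c<n-x. real c) + (\<Sum>c<x. real c - 1)"

text \<open>Projector onto the isotypic component U_(n-x,x) \<boxtimes> V_(n-x,x): spectral projector
  of the central element transp_sum, given by Lagrange interpolation over the
  (pairwise distinct) content sums of the shapes (n-y,y), y = 0..n div 2.\<close>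
definition isotypic_proj :: "nat \<Rightarrow> nat \<Rightarrow> qstate \<Rightarrow> qstate" where
  "isotypic_proj n x \<psi> =
     foldr (\<lambda>y \<phi>. (\<lambda>bs. (transp_sum n \<phi> bs - content_sum n y * \<phi> bs)
                         / (content_sum n x - content_sum n y)))
           (filter (\<lambda>y. y \<noteq> x) [0..<Suc (n div 2)]) \<psi>"

definition dicke :: "nat \<Rightarrow> nat \<Rightarrow> qstate" where
  "dicke L M = (\<lambda>bs. if length bs = L \<and> count_list bs True = M
                     then 1 / sqrt (real (L choose M)) else 0)"

text \<open>|Xi_{n,m|k,l}> = |1>^{\<otimes>l} \<otimes> |0>^{\<otimes>(k-l)} \<otimes> |Xi_{N+M,M}>, M = m-l, N = n-m-k+l.\<close>
definition Xi :: "nat \<Rightarrow> nat \<Rightarrow> nat \<Rightarrow> nat \<Rightarrow> qstate" where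
  "Xi n m k l = (\<lambda>bs. if length bs = n \<and> take l bs = replicate l True
                        \<and> take (k - l) (drop l bs) = replicate (k - l) False
                      then dicke (n - k) (m - l) (drop k bs) else 0)"

definition P_dist :: "nat \<Rightarrow> nat \<Rightarrow> nat \<Rightarrow> nat \<Rightarrow> nat \<Rightarrow> real" where
  "P_dist n m k l x = (if x \<le> n div 2
      then inner_q n (Xi n m k l) (isotypic_proj n x (Xi n m k l)) else 0)"

text \<open>P_{R|xi;k,l} = B_{xi,k-l} * B_{1-xi,l} (convolution = law of the sum of independent variables).\<close>
definition P_R :: "real \<Rightarrow> nat \<Rightarrow> nat \<Rightarrow> nat pmf" where
  "P_R \<xi> k l = map_pmf (\<lambda>(a, b). a + b)
                 (pair_pmf (binomial_pmf (k - l) \<xi>) (binomial_pmf l (1 - \<xi>)))"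

end

theory Submission
  imports Defs "HOL-Combinatorics.Transposition"
begin

text \<open>The isotypic components are the eigenspaces of the sum of all transpositions, which acts on
  shape \<open>(n - y, y)\<close> by the content sum. The state \<open>\<Xi>\<close> arises from the Dicke state, a symmetric
  eigenvector, by prepending \<open>k\<close> qubits. Prepending a qubit to an eigenvector of shape \<open>(n - y, y)\<close>
  splits it, as in the Clebsch--Gordan rule, into eigenvectors of shapes \<open>(n + 1 - y, y)\<close> and
  \<open>(n - y, y + 1)\<close> with explicit rational weights, so \<open>P_dist\<close> is the law of a \<open>k\<close>-step walk on \<open>y\<close>.
  For \<open>m = \<xi> n\<close> a qubit \<open>|1\<rangle>\<close> (resp. \<open>|0\<rangle>\<close>) raises \<open>y\<close> with probability \<open>1 - \<xi> + O(k/n)\<close>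
  (resp. \<open>\<xi> + O(k/n)\<close>); propagating these errors through the \<open>k\<close> steps shows that the walk is
  within \<open>O(4\<^sup>k k/n)\<close> of a sum of independent Bernoulli variables, whose law is \<open>P_R\<close>.\<close>

section \<open>The limit law\<close>

text \<open>\<open>step_prob \<xi> b\<close> is the limiting probability that prepending the qubit \<open>b\<close> raises \<open>y\<close>.\<close>
fun step_prob :: "real \<Rightarrow> bool \<Rightarrow> real" where
  "step_prob \<xi> True = 1 - \<xi>"
| "step_prob \<xi> False = \<xi>"

primrec limit_pmf :: "real \<Rightarrow> bool list \<Rightarrow> nat pmf" where
  "limit_pmf \<xi> [] = return_pmf 0"
| "limit_pmf \<xi> (b # a) =
     map_pmf (\<lambda>(y, c). y + of_bool c) (pair_pmf (limit_pmf \<xi> a) (bernoulli_pmf (step_prob \<xi> b)))"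

lemma step_prob_range: "0 \<le> \<xi> \<Longrightarrow> \<xi> \<le> 1 \<Longrightarrow> step_prob \<xi> b \<in> {0..1}"
  by (cases b) auto

lemma limit_pmf_replicate_append:
  assumes "0 \<le> \<xi>" "\<xi> \<le> 1"
  shows "limit_pmf \<xi> (replicate j b @ a) =
           map_pmf (\<lambda>(x, y). x + y) (pair_pmf (limit_pmf \<xi> a) (binomial_pmf j (step_prob \<xi> b)))"
proof (induction j)
  case 0
  then show ?case using step_prob_range[OF assms]
    by (simp add: binomial_pmf_0 map_pmf_def pair_pmf_def bind_return_pmf bind_return_pmf' bind_assoc_pmf)
next
  case (Suc j)
  show ?case using step_prob_range[OF assms]
    apply (simp add: Suc binomial_pmf_Suc map_pmf_def pair_pmf_def bind_return_pmf bind_return_pmf' bind_assoc_pmf)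
    apply (rule bind_pmf_cong, simp)
    apply (subst bind_commute_pmf)
    apply (intro bind_pmf_cong)
      apply simp_all
    done
qed

lemma P_R_eq_limit_pmf:
  assumes "0 \<le> \<xi>" "\<xi> \<le> 1"
  shows "P_R \<xi> k l = limit_pmf \<xi> (replicate l True @ replicate (k - l) False)"
proof -
  have "limit_pmf \<xi> (replicate (k - l) False) = binomial_pmf (k - l) \<xi>"
    using limit_pmf_replicate_append[OF assms, of "k - l" False "[]"]
    by (simp add: map_pmf_def pair_pmf_def bind_return_pmf bind_return_pmf' bind_assoc_pmf)
  then show ?thesis
    using limit_pmf_replicate_append[OF assms, of l True "replicate (k - l) False"]
    by (simp add: P_R_def)
qed

lemma pmf_map_Suc: "pmf (map_pmf Suc p) y = (if 0 < y then pmf p (y - 1) else 0)"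
proof (cases y)
  case 0
  then show ?thesis by (auto simp: pmf_eq_0_set_pmf)
next
  case (Suc y')
  then show ?thesis using pmf_map_inj'[of Suc p y'] by simp
qed

lemma pmf_limit_pmf_Cons:
  assumes "0 \<le> \<xi>" "\<xi> \<le> 1"
  shows "pmf (limit_pmf \<xi> (b # a)) y = (1 - step_prob \<xi> b) * pmf (limit_pmf \<xi> a) y
           + (if 0 < y then step_prob \<xi> b * pmf (limit_pmf \<xi> a) (y - 1) else 0)"
proof -
  have "limit_pmf \<xi> (b # a) =
      bernoulli_pmf (step_prob \<xi> b) \<bind> (\<lambda>c. map_pmf (\<lambda>z. z + of_bool c) (limit_pmf \<xi> a))"
    by (simp add: map_pmf_def pair_pmf_def bind_return_pmf bind_return_pmf' bind_assoc_pmf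
        bind_commute_pmf[of "limit_pmf \<xi> a"])
  then show ?thesis
    using step_prob_range[OF assms] pmf_map_Suc[of "limit_pmf \<xi> a"]
    by (simp add: pmf_bind integral_bernoulli_pmf algebra_simps)
qed

lemma set_pmf_limit_pmf: "set_pmf (limit_pmf \<xi> a) \<subseteq> {..length a}"
  by (induction a) (auto simp: set_pair_pmf)

lemma pmf_limit_pmf_eq_0: "length a < y \<Longrightarrow> pmf (limit_pmf \<xi> a) y = 0"
  using set_pmf_limit_pmf[of \<xi> a] by (auto simp: set_pmf_iff)

lemma sum_limit_pmf_Cons:
  assumes "0 \<le> \<xi>" "\<xi> \<le> 1"
  shows "(\<Sum>y\<le>Suc (length a). pmf (limit_pmf \<xi> (b # a)) y * f y) =
           (1 - step_prob \<xi> b) * (\<Sum>y\<le>length a. pmf (limit_pmf \<xi> a) y * f y)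
           + step_prob \<xi> b * (\<Sum>y\<le>length a. pmf (limit_pmf \<xi> a) y * f (Suc y))"
proof -
  let ?p = "pmf (limit_pmf \<xi> a)" and ?t = "length a" and ?c = "step_prob \<xi> b"
  have "(\<Sum>y\<le>Suc ?t. pmf (limit_pmf \<xi> (b # a)) y * f y)
      = (\<Sum>y\<le>Suc ?t. (1 - ?c) * (?p y * f y)) + (\<Sum>y\<le>Suc ?t. if 0 < y then ?c * ?p (y - 1) * f y else 0)"
    unfolding sum.distrib[symmetric]
    by (intro sum.cong refl) (simp add: pmf_limit_pmf_Cons[OF assms] algebra_simps del: limit_pmf.simps)
  also have "(\<Sum>y\<le>Suc ?t. (1 - ?c) * (?p y * f y)) = (1 - ?c) * (\<Sum>y\<le>?t. ?p y * f y)"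
    using pmf_limit_pmf_eq_0[of a "Suc ?t"] by (simp add: sum_distrib_left)
  also have "(\<Sum>y\<le>Suc ?t. if 0 < y then ?c * ?p (y - 1) * f y else 0) = ?c * (\<Sum>y\<le>?t. ?p y * f (Suc y))"
    by (subst sum.atMost_Suc_shift) (simp add: sum_distrib_left algebra_simps)
  finally show ?thesis .
qed

lemma limit_pmf_moments:
  assumes "0 \<le> \<xi>" "\<xi> \<le> 1"
  shows "(\<Sum>y\<le>length a. pmf (limit_pmf \<xi> a) y) = 1
       \<and> (\<Sum>y\<le>length a. pmf (limit_pmf \<xi> a) y * real y) = (\<Sum>b\<leftarrow>a. step_prob \<xi> b)
       \<and> (\<Sum>y\<le>length a. pmf (limit_pmf \<xi> a) y * (real y)\<^sup>2)
           = (\<Sum>b\<leftarrow>a. step_prob \<xi> b)\<^sup>2 + (\<Sum>b\<leftarrow>a. step_prob \<xi> b * (1 - step_prob \<xi> b))"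
proof (induction a)
  case Nil
  then show ?case by simp
next
  case (Cons b a)
  let ?p = "pmf (limit_pmf \<xi> a)" and ?t = "length a"
  have shift: "(\<Sum>y\<le>?t. ?p y * real (Suc y)) = (\<Sum>y\<le>?t. ?p y * real y) + (\<Sum>y\<le>?t. ?p y)"
    "(\<Sum>y\<le>?t. ?p y * (real (Suc y))\<^sup>2)
       = (\<Sum>y\<le>?t. ?p y * (real y)\<^sup>2) + 2 * (\<Sum>y\<le>?t. ?p y * real y) + (\<Sum>y\<le>?t. ?p y)"
    by (simp_all add: sum.distrib[symmetric] sum_distrib_left algebra_simps power2_eq_square)
  show ?case
    using sum_limit_pmf_Cons[OF assms, where a = a and b = b and f = "\<lambda>_. 1"]
      sum_limit_pmf_Cons[OF assms, where a = a and b = b and f = real]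
      sum_limit_pmf_Cons[OF assms, where a = a and b = b and f = "\<lambda>y. (real y)\<^sup>2"] shift Cons.IH
    by (simp add: power2_eq_square algebra_simps del: sum.atMost_Suc limit_pmf.simps)
qed

lemma expectation_limit_pmf:
  "measure_pmf.expectation (limit_pmf \<xi> a) f = (\<Sum>y\<le>length a. pmf (limit_pmf \<xi> a) y * f y)"
  by (subst integral_measure_pmf[where A = "{..length a}"])
     (use set_pmf_limit_pmf in \<open>auto simp: mult.commute\<close>)

lemma mean_limit_pmf:
  assumes "0 \<le> \<xi>" "\<xi> \<le> 1"
  shows "measure_pmf.expectation (limit_pmf \<xi> a) real = (\<Sum>b\<leftarrow>a. step_prob \<xi> b)"
  using limit_pmf_moments[OF assms, of a] by (simp add: expectation_limit_pmf)

lemma variance_limit_pmf: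
  assumes "0 \<le> \<xi>" "\<xi> \<le> 1"
  shows "measure_pmf.variance (limit_pmf \<xi> a) real = (\<Sum>b\<leftarrow>a. step_prob \<xi> b * (1 - step_prob \<xi> b))"
proof -
  let ?S = "\<lambda>f. \<Sum>y\<le>length a. pmf (limit_pmf \<xi> a) y * f y" and ?\<mu> = "\<Sum>b\<leftarrow>a. step_prob \<xi> b"
  have "measure_pmf.variance (limit_pmf \<xi> a) real = ?S (\<lambda>y. (real y - ?\<mu>)\<^sup>2)"
    unfolding mean_limit_pmf[OF assms] by (rule expectation_limit_pmf)
  also have "\<dots> = ?S (\<lambda>y. (real y)\<^sup>2) - 2 * ?\<mu> * ?S real + ?\<mu>\<^sup>2 * ?S (\<lambda>_. 1)"
    by (simp add: power2_eq_square algebra_simps sum.distrib sum_subtractf sum_distrib_left)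
  also have "\<dots> = (\<Sum>b\<leftarrow>a. step_prob \<xi> b * (1 - step_prob \<xi> b))"
    using limit_pmf_moments[OF assms, of a] by (simp add: power2_eq_square)
  finally show ?thesis .
qed

lemma P_R_support_mean_variance:
  assumes "0 \<le> \<xi>" "\<xi> \<le> 1" "l \<le> k"
  shows "set_pmf (P_R \<xi> k l) \<subseteq> {0..k}
       \<and> measure_pmf.expectation (P_R \<xi> k l) real = real (k - l) * \<xi> + real l * (1 - \<xi>)
       \<and> measure_pmf.variance (P_R \<xi> k l) real = real k * \<xi> * (1 - \<xi>)"
proof -
  define a where "a = replicate l True @ replicate (k - l) False"
  have P_R: "P_R \<xi> k l = limit_pmf \<xi> a"
    unfolding a_def by (rule P_R_eq_limit_pmf[OF assms(1,2)])
  have "set_pmf (limit_pmf \<xi> a) \<subseteq> {0..k}"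
    using set_pmf_limit_pmf[of \<xi> a] assms(3) by (auto simp: a_def)
  moreover have "measure_pmf.expectation (limit_pmf \<xi> a) real = real (k - l) * \<xi> + real l * (1 - \<xi>)"
    by (simp add: mean_limit_pmf[OF assms(1,2)] a_def sum_list_replicate)
  moreover have "measure_pmf.variance (limit_pmf \<xi> a) real = real k * \<xi> * (1 - \<xi>)"
    unfolding variance_limit_pmf[OF assms(1,2)]
    using assms(3) by (simp add: a_def sum_list_replicate of_nat_diff algebra_simps)
  ultimately show ?thesis unfolding P_R by blast
qed

section \<open>The transposition sum and the collective ladder operators\<close>

definition prepend :: "bool \<Rightarrow> qstate \<Rightarrow> qstate" where
  "prepend b \<phi> = (\<lambda>bs. case bs of [] \<Rightarrow> 0 | c # rest \<Rightarrow> if c = b then \<phi> rest else 0)"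

definition positions :: "bool list \<Rightarrow> bool \<Rightarrow> nat set" where
  "positions s b = {j. j < length s \<and> s ! j = b}"

definition ladder :: "bool \<Rightarrow> qstate \<Rightarrow> qstate" where
  "ladder b \<phi> = (\<lambda>s. \<Sum>j\<in>positions s b. \<phi> (s[j := \<not> b]))"

definition index_pairs :: "nat \<Rightarrow> (nat \<times> nat) set" where
  "index_pairs n = {(i, j). i < j \<and> j < n}"

lemma finite_positions [simp]: "finite (positions s b)"
  by (simp add: positions_def)

lemma count_list_eq_card_positions: "count_list s b = card (positions s b)"
  by (simp add: positions_def count_list_eq_length_filter length_filter_conv_card eq_commute)

lemma count_list_False: "count_list s False = length s - count_list s True"
  by (induction s) (auto simp: Suc_diff_le count_le_length)

lemma finite_index_pairs [simp]: "finite (index_pairs n)"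
  by (rule finite_subset[of _ "{..<n} \<times> {..<n}"]) (auto simp: index_pairs_def)

lemma sum_index_pairs: "(\<Sum>(i, j)\<in>index_pairs n. F i j) = (\<Sum>j<n. \<Sum>i<j. F i j)"
proof -
  have "(\<Sum>(i, j)\<in>index_pairs n. F i j) = (\<Sum>(j, i)\<in>Sigma {..<n} (\<lambda>j. {..<j}). F i j)"
    by (rule sum.reindex_bij_witness[of _ "\<lambda>(j, i). (i, j)" "\<lambda>(i, j). (j, i)"]) (auto simp: index_pairs_def)
  then show ?thesis by (simp add: sum.Sigma)
qed

lemma sum_index_pairs_Suc:
  "(\<Sum>(i, j)\<in>index_pairs (Suc n). F i j) = (\<Sum>j<n. F 0 (Suc j)) + (\<Sum>(i, j)\<in>index_pairs n. F (Suc i) (Suc j))"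
  unfolding sum_index_pairs by (simp add: sum.lessThan_Suc_shift sum.distrib del: sum.lessThan_Suc)

lemma sum_of_nat_lessThan: "(\<Sum>j<n. real j) = real n * (real n - 1) / 2"
  by (induction n) (auto simp: field_simps)

lemma card_index_pairs: "real (card (index_pairs n)) = real n * (real n - 1) / 2"
  using sum_index_pairs[of "\<lambda>_ _. 1 :: real" n] by (simp add: sum_of_nat_lessThan)

lemma transp_sum_index_pairs: "transp_sum n \<psi> bs = (\<Sum>(i, j)\<in>index_pairs n. swap_op i j \<psi> bs)"
  by (simp add: transp_sum_def index_pairs_def)

lemma transp_sum_cong:
  "(\<And>s. length s = length bs \<Longrightarrow> f s = g s) \<Longrightarrow> transp_sum n f bs = transp_sum n g bs"
  by (simp add: transp_sum_def swap_op_def)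

lemma transp_sum_add: "transp_sum n (\<lambda>s. f s + g s) bs = transp_sum n f bs + transp_sum n g bs"
  by (simp add: transp_sum_def swap_op_def sum.distrib case_prod_beta)

lemma transp_sum_scale: "transp_sum n (\<lambda>s. c * f s) bs = c * transp_sum n f bs"
  by (simp add: transp_sum_def swap_op_def sum_distrib_left case_prod_beta)

lemma transp_sum_sum:
  "transp_sum n (\<lambda>s. \<Sum>y\<in>Y. f y s) bs = (\<Sum>y\<in>Y. transp_sum n (f y) bs)"
  unfolding transp_sum_def swap_op_def case_prod_beta by (rule sum.swap)

lemma transp_sum_zero: "(\<And>t. f t = 0) \<Longrightarrow> transp_sum n f bs = 0"
  by (simp add: transp_sum_def swap_op_def)

lemma transp_sum_prepend:
  assumes "length rest = n"
  shows "transp_sum (Suc n) (prepend b \<phi>) (c # rest) =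
     (if c = b then transp_sum n \<phi> rest + real (count_list rest b) * \<phi> rest else ladder b \<phi> rest)"
proof -
  have first: "swap_op 0 (Suc j) (prepend b \<phi>) (c # rest) = (if rest ! j = b then \<phi> (rest[j := c]) else 0)" for j
    by (simp add: swap_op_def prepend_def)
  have others: "swap_op (Suc i) (Suc j) (prepend b \<phi>) (c # rest) = (if c = b then swap_op i j \<phi> rest else 0)" for i j
    by (simp add: swap_op_def prepend_def)
  have "(\<Sum>j<n. if rest ! j = b then \<phi> (rest[j := c]) else 0) = (\<Sum>j\<in>positions rest b. \<phi> (rest[j := c]))"
    using assms by (simp add: positions_def sum.If_cases Collect_conj_eq lessThan_def Int_commute)
  then have "transp_sum (Suc n) (prepend b \<phi>) (c # rest)
      = (\<Sum>j\<in>positions rest b. \<phi> (rest[j := c])) + (if c = b then transp_sum n \<phi> rest else 0)"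
    by (simp add: transp_sum_index_pairs sum_index_pairs_Suc first others)
  moreover have "(\<Sum>j\<in>positions rest b. \<phi> (rest[j := b])) = (\<Sum>j\<in>positions rest b. \<phi> rest)"
  proof (intro sum.cong refl)
    fix j assume "j \<in> positions rest b"
    then have "rest[j := b] = rest" unfolding positions_def using list_update_id[of rest j] by auto
    then show "\<phi> (rest[j := b]) = \<phi> rest" by simp
  qed
  then have "(\<Sum>j\<in>positions rest b. \<phi> (rest[j := b])) = real (count_list rest b) * \<phi> rest"
    by (simp add: count_list_eq_card_positions)
  ultimately show ?thesis by (auto simp: ladder_def)
qed

lemma swap_list_update:
  assumes "i < length s" "j < length s" "q < length s"
  shows "(s[i := s ! j, j := s ! i])[Transposition.transpose i j q := v]
       = (s[q := v])[i := (s[q := v]) ! j, j := (s[q := v]) ! i]"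
  using assms by (intro nth_equalityI) (auto simp: Transposition.transpose_def nth_list_update)

lemma swap_op_ladder:
  assumes "i < length s" "j < length s"
  shows "swap_op i j (ladder b \<phi>) s = ladder b (swap_op i j \<phi>) s"
proof -
  let ?s' = "s[i := s ! j, j := s ! i]"
  have "swap_op i j (ladder b \<phi>) s = (\<Sum>p\<in>positions ?s' b. \<phi> (?s'[p := \<not> b]))"
    by (simp add: swap_op_def ladder_def)
  also have "\<dots> = (\<Sum>q\<in>positions s b. \<phi> (?s'[Transposition.transpose i j q := \<not> b]))"
    by (rule sum.reindex_bij_witness[of _ "Transposition.transpose i j" "Transposition.transpose i j"])
       (use assms in \<open>auto simp: positions_def Transposition.transpose_def nth_list_update split: if_splits\<close>)
  also have "\<dots> = (\<Sum>q\<in>positions s b. swap_op i j \<phi> (s[q := \<not> b]))"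
    by (intro sum.cong refl) (simp add: swap_op_def positions_def swap_list_update assms)
  finally show ?thesis by (simp add: ladder_def)
qed

lemma ladder_sum: "ladder b (\<lambda>s. \<Sum>a\<in>A. f a s) s = (\<Sum>a\<in>A. ladder b (f a) s)"
  by (simp add: ladder_def sum.swap[of _ A])

lemma transp_sum_ladder:
  assumes "length s = n"
  shows "transp_sum n (ladder b \<phi>) s = ladder b (transp_sum n \<phi>) s"
proof -
  have "transp_sum n (ladder b \<phi>) s = (\<Sum>(i, j)\<in>index_pairs n. ladder b (swap_op i j \<phi>) s)"
    unfolding transp_sum_index_pairs
    by (intro sum.cong refl) (use assms in \<open>auto simp: index_pairs_def swap_op_ladder\<close>)
  also have "\<dots> = ladder b (transp_sum n \<phi>) s"
    unfolding transp_sum_index_pairs[abs_def] by (subst ladder_sum) (simp add: case_prod_beta)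
  finally show ?thesis .
qed

lemma ladder_ladder_eq:
  "ladder (\<not> b) (ladder b \<phi>) s = real (count_list s (\<not> b)) * \<phi> s
     + (\<Sum>(i, j)\<in>positions s (\<not> b) \<times> positions s b. \<phi> (s[i := b, j := \<not> b]))"
proof -
  have flip_back: "ladder b \<phi> (s[i := b]) = \<phi> s + (\<Sum>j\<in>positions s b. \<phi> (s[i := b, j := \<not> b]))"
    if "i \<in> positions s (\<not> b)" for i
  proof -
    have "positions (s[i := b]) b = insert i (positions s b)" "i \<notin> positions s b"
      using that by (auto simp: positions_def nth_list_update)
    moreover have "s[i := b, i := \<not> b] = s"
      using that list_update_id[of s i] by (auto simp: positions_def)
    ultimately show ?thesis by (simp add: ladder_def)
  qed
  have "ladder (\<not> b) (ladder b \<phi>) s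
      = (\<Sum>i\<in>positions s (\<not> b). \<phi> s + (\<Sum>j\<in>positions s b. \<phi> (s[i := b, j := \<not> b])))"
    unfolding ladder_def[of "\<not> b"] using flip_back by (intro sum.cong refl) simp
  then show ?thesis
    by (simp add: sum.distrib sum.cartesian_product count_list_eq_card_positions)
qed

lemma sum_index_pairs_unequal:
  assumes "length s = n"
  shows "(\<Sum>(i, j)\<in>{(i, j)\<in>index_pairs n. s ! i \<noteq> s ! j}. F i j)
       = (\<Sum>(i, j)\<in>positions s (\<not> b) \<times> positions s b. F (min i j) (max i j))"
proof -
  let ?S = "{(i, j)\<in>index_pairs n. s ! i \<noteq> s ! j}" and ?T = "positions s (\<not> b) \<times> positions s b"
  let ?sort = "\<lambda>(i, j). (min i j, max i j)"
  let ?orient = "\<lambda>(i, j). if s ! i = (\<not> b) then (i, j) else (j, i)"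
  have orient: "?orient p \<in> ?T \<and> ?sort (?orient p) = p
      \<and> (case ?orient p of (i, j) \<Rightarrow> F (min i j) (max i j)) = (case p of (i, j) \<Rightarrow> F i j)" if p_in: "p \<in> ?S" for p
  proof -
    obtain i j where "p = (i, j)" "i < j" "j < n" "s ! i \<noteq> s ! j"
      using p_in unfolding index_pairs_def by blast
    then show ?thesis using assms by (cases "s ! i = (\<not> b)") (auto simp: positions_def)
  qed
  have sort: "?sort q \<in> ?S \<and> ?orient (?sort q) = q" if q_in: "q \<in> ?T" for q
  proof -
    obtain i j where q: "q = (i, j)" "i < n" "j < n" "s ! i = (\<not> b)" "s ! j = b"
      using q_in assms unfolding positions_def by blast
    then have "i \<noteq> j" by auto
    with q show ?thesis by (cases "i < j") (auto simp: index_pairs_def)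
  qed
  show ?thesis
    by (rule sum.reindex_bij_witness[of _ ?sort ?orient]) (use orient sort in \<open>simp_all\<close>)
qed

lemma sum_swap_op_unequal:
  assumes "length s = n"
  shows "(\<Sum>(i, j)\<in>{(i, j)\<in>index_pairs n. s ! i \<noteq> s ! j}. swap_op i j \<phi> s)
       = (\<Sum>(i, j)\<in>positions s (\<not> b) \<times> positions s b. \<phi> (s[i := b, j := \<not> b]))"
proof -
  have "(\<Sum>(i, j)\<in>{(i, j)\<in>index_pairs n. s ! i \<noteq> s ! j}. swap_op i j \<phi> s)
      = (\<Sum>(i, j)\<in>positions s (\<not> b) \<times> positions s b. swap_op (min i j) (max i j) \<phi> s)"
    by (rule sum_index_pairs_unequal[OF assms])
  also have "\<dots> = (\<Sum>(i, j)\<in>positions s (\<not> b) \<times> positions s b. \<phi> (s[i := b, j := \<not> b]))"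
  proof (intro sum.cong refl)
    fix q assume "q \<in> positions s (\<not> b) \<times> positions s b"
    then obtain i j where q: "q = (i, j)" "s ! i = (\<not> b)" "s ! j = b"
      unfolding positions_def by blast
    then have "i \<noteq> j" by auto
    with q show "(case q of (i, j) \<Rightarrow> swap_op (min i j) (max i j) \<phi> s)
        = (case q of (i, j) \<Rightarrow> \<phi> (s[i := b, j := \<not> b]))"
      by (cases "i < j") (simp_all add: swap_op_def list_update_swap)
  qed
  finally show ?thesis .
qed

lemma transp_sum_eq_ladder_pairs:
  assumes "length s = n"
  shows "transp_sum n \<phi> s
       = (real n * (real n - 1) / 2 - real (count_list s (\<not> b)) * real (count_list s b)) * \<phi> s
         + (\<Sum>(i, j)\<in>positions s (\<not> b) \<times> positions s b. \<phi> (s[i := b, j := \<not> b]))"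
proof -
  define E where "E = {(i, j)\<in>index_pairs n. s ! i = s ! j}"
  define D where "D = {(i, j)\<in>index_pairs n. s ! i \<noteq> s ! j}"
  have split: "index_pairs n = E \<union> D" "E \<inter> D = {}" and fin: "finite E" "finite D"
    by (auto simp: E_def D_def intro: finite_subset[OF _ finite_index_pairs])
  have "(\<Sum>(i, j)\<in>E. swap_op i j \<phi> s) = (\<Sum>(i, j)\<in>E. \<phi> s)"
  proof (intro sum.cong refl)
    fix p assume "p \<in> E"
    then obtain i j where p: "p = (i, j)" and "s ! i = s ! j"
      unfolding E_def by blast
    then have "s[i := s ! j, j := s ! i] = s" using list_update_id[of s i] list_update_id[of s j] by simp
    then show "(case p of (i, j) \<Rightarrow> swap_op i j \<phi> s) = (case p of (i, j) \<Rightarrow> \<phi> s)"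
      by (simp add: p swap_op_def)
  qed
  then have equal: "(\<Sum>(i, j)\<in>E. swap_op i j \<phi> s) = real (card E) * \<phi> s"
    by simp
  have unequal: "(\<Sum>(i, j)\<in>D. swap_op i j \<phi> s)
      = (\<Sum>(i, j)\<in>positions s (\<not> b) \<times> positions s b. \<phi> (s[i := b, j := \<not> b]))"
    unfolding D_def by (rule sum_swap_op_unequal[OF assms])
  have "real (card D) = real (count_list s (\<not> b)) * real (count_list s b)"
    using sum_index_pairs_unequal[OF assms, of "\<lambda>_ _. 1 :: real" b]
    by (simp add: D_def count_list_eq_card_positions card_cartesian_product)
  moreover have "card (index_pairs n) = card E + card D"
    using split fin by (simp add: card_Un_disjoint)
  ultimately have "real (card E) = real n * (real n - 1) / 2 - real (count_list s (\<not> b)) * real (count_list s b)"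
    using card_index_pairs[of n] by simp
  then show ?thesis
    using equal unequal fin split by (simp add: transp_sum_index_pairs sum.union_disjoint)
qed

text \<open>The Casimir relation: \<open>J\<^sub>\<mp> J\<^sub>\<plusminus>\<close> differs from the transposition sum by a scalar on each weight space.\<close>
lemma ladder_ladder:
  assumes "length s = n"
  shows "ladder (\<not> b) (ladder b \<phi>) s = transp_sum n \<phi> s
    - (real n * (real n - 1) / 2 - real (count_list s (\<not> b)) * real (count_list s b)
       - real (count_list s (\<not> b))) * \<phi> s"
  using ladder_ladder_eq[of b \<phi> s] transp_sum_eq_ladder_pairs[OF assms, of \<phi> b]
  by (simp add: algebra_simps)

lemma sum_basis_strings_Suc:
  "(\<Sum>s\<in>basis_strings (Suc n). F s) = (\<Sum>s\<in>basis_strings n. F (True#s) + F (False#s))"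
proof -
  have fin: "finite (basis_strings n)" unfolding basis_strings_def by (rule finite_list_length)
  have eq: "basis_strings (Suc n) = (Cons True) ` basis_strings n \<union> (Cons False) ` basis_strings n"
    by (auto simp: basis_strings_def length_Suc_conv)
  have "(\<Sum>s\<in>basis_strings (Suc n). F s) = (\<Sum>s\<in>(Cons True) ` basis_strings n. F s) + (\<Sum>s\<in>(Cons False) ` basis_strings n. F s)"
    unfolding eq by (rule sum.union_disjoint) (use fin in auto)
  also have "\<dots> = (\<Sum>s\<in>basis_strings n. F (True#s)) + (\<Sum>s\<in>basis_strings n. F (False#s))"
    by (simp add: sum.reindex)
  finally show ?thesis by (simp add: sum.distrib)
qed

lemma inner_q_prepend:
  "inner_q (Suc n) (prepend b \<psi>) (\<lambda>s. k1 * prepend b \<phi> s + k2 * prepend (\<not>b) ch s) = k1 * inner_q n \<psi> \<phi>"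
  unfolding inner_q_def sum_basis_strings_Suc
  by (cases b) (simp_all add: prepend_def sum_distrib_left algebra_simps)

lemma inner_q_add: "inner_q n f (\<lambda>s. g s + h s) = inner_q n f g + inner_q n f h"
  by (simp add: inner_q_def sum.distrib algebra_simps)

lemma inner_q_cong:
  "(\<And>s. length s = n \<Longrightarrow> f s = f' s) \<Longrightarrow> (\<And>s. length s = n \<Longrightarrow> g s = g' s) \<Longrightarrow> inner_q n f g = inner_q n f' g'"
  unfolding inner_q_def basis_strings_def by (intro sum.cong refl) auto

lemma count_list_update:
  assumes "p < length s"
  shows "int (count_list (s[p := v]) x) = int (count_list s x) - of_bool (s ! p = x) + of_bool (v = x)"
proof -
  have "s ! p \<in># mset s" using assms by simp
  then show ?thesis
    using assms by (auto simp: count_mset[symmetric] mset_update count_diff insert_DiffM2 in_diff_count)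
qed

lemma ladder_nonzero: "ladder b \<phi> s \<noteq> 0 \<Longrightarrow> \<exists>p\<in>positions s b. \<phi> (s[p := \<not> b]) \<noteq> 0"
  unfolding ladder_def by (blast dest: sum.not_neutral_contains_not_neutral)

lemma ladder_cong: "(\<And>t. length t = length s \<Longrightarrow> f t = g t) \<Longrightarrow> ladder b f s = ladder b g s"
  unfolding ladder_def by (intro sum.cong refl) simp

lemma ladder_scale: "ladder b (\<lambda>t. k * f t) s = k * ladder b f s"
  unfolding ladder_def by (simp add: sum_distrib_left)

section \<open>Projection onto isotypic components\<close>

lemma content_sum_eq:
  "x \<le> n \<Longrightarrow> content_sum n x = (real n ^ 2 - real n) / 2 - real n * real x + real x ^ 2 - real x"
proof -
  assume x: "x \<le> n"
  have h1: "content_sum n x = real (n - x) * (real (n - x) - 1) / 2 + (real x * (real x - 1) / 2 - real x)"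
    unfolding content_sum_def by (simp add: sum_subtractf sum_of_nat_lessThan)
  have h2: "real (n - x) = real n - real x" using x by simp
  show ?thesis unfolding h1 h2 power2_eq_square by (simp add: field_simps)
qed

lemma content_sum_diff:
  "x \<le> n \<Longrightarrow> z \<le> n \<Longrightarrow> content_sum n x - content_sum n z = (real z - real x) * (real n + 1 - real x - real z)"
  by (simp add: content_sum_eq power2_eq_square algebra_simps)

lemma content_sum_neq:
  "x \<le> n div 2 \<Longrightarrow> z \<le> n div 2 \<Longrightarrow> x \<noteq> z \<Longrightarrow> content_sum n x \<noteq> content_sum n z"
proof -
  assume a: "x \<le> n div 2" "z \<le> n div 2" "x \<noteq> z"
  then have "x \<le> n" "z \<le> n" by auto
  moreover have "real n + 1 - real x - real z > 0" using a by linarith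
  moreover have "real z - real x \<noteq> 0" using a(3) by simp
  ultimately have "(real z - real x) * (real n + 1 - real x - real z) \<noteq> 0" by simp
  moreover have "content_sum n x - content_sum n z = (real z - real x) * (real n + 1 - real x - real z)"
    by (rule content_sum_diff) fact+
  ultimately show ?thesis by (metis eq_iff_diff_eq_0)
qed

definition in_weight_space :: "nat \<Rightarrow> nat \<Rightarrow> qstate \<Rightarrow> bool" where
  "in_weight_space n r \<phi> \<longleftrightarrow> (\<forall>t. \<phi> t \<noteq> 0 \<longrightarrow> length t = n \<and> count_list t True = r)"

definition transp_eigen :: "nat \<Rightarrow> real \<Rightarrow> qstate \<Rightarrow> bool" where
  "transp_eigen n c \<phi> \<longleftrightarrow> (\<forall>t. length t = n \<longrightarrow> transp_sum n \<phi> t = c * \<phi> t)"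

lemma in_weight_space_lincomb:
  "in_weight_space n r f \<Longrightarrow> in_weight_space n r g \<Longrightarrow> in_weight_space n r (\<lambda>s. a * f s + c * g s)"
  unfolding in_weight_space_def by (metis add.right_neutral mult_zero_right)

lemma in_weight_space_add:
  "in_weight_space n r f \<Longrightarrow> in_weight_space n r g \<Longrightarrow> in_weight_space n r (\<lambda>s. f s + g s)"
  using in_weight_space_lincomb[of n r f g 1 1] by simp

lemma transp_eigen_add:
  "transp_eigen n c f \<Longrightarrow> transp_eigen n c g \<Longrightarrow> transp_eigen n c (\<lambda>s. f s + g s)"
  by (simp add: transp_eigen_def transp_sum_add algebra_simps)

lemma transp_eigen_zero: "transp_eigen n c (\<lambda>_. 0)"
  by (simp add: transp_eigen_def transp_sum_zero)

lemma lagrange_foldr_eigen_sum: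
  assumes eig: "\<And>y. y \<in> Y \<Longrightarrow> transp_eigen n (content_sum n y) (w y)"
    and \<psi>: "\<And>s. length s = n \<Longrightarrow> \<psi> s = (\<Sum>y\<in>Y. w y s)"
    and "length s = n"
  shows "foldr (\<lambda>z \<phi> bs. (transp_sum n \<phi> bs - content_sum n z * \<phi> bs) / (content_sum n x - content_sum n z)) L \<psi> s
    = (\<Sum>y\<in>Y. (\<Prod>z\<leftarrow>L. (content_sum n y - content_sum n z) / (content_sum n x - content_sum n z)) * w y s)"
  using assms(3)
proof (induction L arbitrary: s)
  case Nil
  then show ?case using \<psi> by simp
next
  case (Cons z L)
  let ?F = "foldr (\<lambda>z \<phi> bs. (transp_sum n \<phi> bs - content_sum n z * \<phi> bs) / (content_sum n x - content_sum n z)) L \<psi>"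
  let ?P = "\<lambda>y. \<Prod>z\<leftarrow>L. (content_sum n y - content_sum n z) / (content_sum n x - content_sum n z)"
  have "transp_sum n ?F s = transp_sum n (\<lambda>t. \<Sum>y\<in>Y. ?P y * w y t) s"
    by (rule transp_sum_cong) (use Cons in auto)
  also have "\<dots> = (\<Sum>y\<in>Y. ?P y * (content_sum n y * w y s))"
    using eig Cons.prems by (simp add: transp_sum_sum transp_sum_scale transp_eigen_def)
  finally have T: "transp_sum n ?F s = (\<Sum>y\<in>Y. ?P y * (content_sum n y * w y s))" .
  let ?d = "content_sum n x - content_sum n z"
  have "(transp_sum n ?F s - content_sum n z * ?F s) / ?d
      = (\<Sum>y\<in>Y. (?P y * (content_sum n y * w y s) - content_sum n z * (?P y * w y s)) / ?d)"
    unfolding T Cons.IH[OF Cons.prems]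
    by (simp only: sum_distrib_left sum_subtractf[symmetric] sum_divide_distrib)
  also have "\<dots> = (\<Sum>y\<in>Y. ((content_sum n y - content_sum n z) / ?d * ?P y) * w y s)"
    by (intro sum.cong refl) (simp add: algebra_simps)
  finally show ?case by simp
qed

lemma lagrange_basis_content_sum:
  assumes "x \<le> n div 2" "y \<le> n div 2"
  shows "(\<Prod>z\<leftarrow>filter (\<lambda>z. z \<noteq> x) [0..<Suc (n div 2)].
            (content_sum n y - content_sum n z) / (content_sum n x - content_sum n z)) = of_bool (y = x)"
proof (cases "y = x")
  case True
  let ?L = "filter (\<lambda>z. z \<noteq> x) [0..<Suc (n div 2)]"
  have "map (\<lambda>z. (content_sum n x - content_sum n z) / (content_sum n x - content_sum n z)) ?L = map (\<lambda>_. 1) ?L"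
  proof (intro map_cong refl)
    fix z assume "z \<in> set ?L"
    then have "content_sum n x \<noteq> content_sum n z"
      using content_sum_neq[OF assms(1)] by (auto simp del: upt_Suc)
    then show "(content_sum n x - content_sum n z) / (content_sum n x - content_sum n z) = 1"
      by simp
  qed
  then show ?thesis unfolding True by (simp add: map_replicate_const)
next
  case False
  let ?f = "\<lambda>z. (content_sum n y - content_sum n z) / (content_sum n x - content_sum n z)"
  have y: "y \<in> set (filter (\<lambda>z. z \<noteq> x) [0..<Suc (n div 2)])"
    using False assms(2) by (simp del: upt_Suc)
  have "0 \<in> set (map ?f (filter (\<lambda>z. z \<noteq> x) [0..<Suc (n div 2)]))"
    unfolding set_map by (rule image_eqI[where x = y]) (simp_all only: y diff_self div_0)
  then show ?thesis
    using False by (simp only: prod_list_zero_iff of_bool_def if_False)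
qed

lemma isotypic_proj_eigen_sum:
  assumes "finite Y" "Y \<subseteq> {..n div 2}" "x \<le> n div 2"
    and eig: "\<And>y. y \<in> Y \<Longrightarrow> transp_eigen n (content_sum n y) (w y)"
    and \<psi>: "\<And>s. length s = n \<Longrightarrow> \<psi> s = (\<Sum>y\<in>Y. w y s)"
    and s: "length s = n"
  shows "isotypic_proj n x \<psi> s = (if x \<in> Y then w x s else 0)"
proof -
  have "isotypic_proj n x \<psi> s = (\<Sum>y\<in>Y. (\<Prod>z\<leftarrow>filter (\<lambda>z. z \<noteq> x) [0..<Suc (n div 2)].
      (content_sum n y - content_sum n z) / (content_sum n x - content_sum n z)) * w y s)"
    unfolding isotypic_proj_def by (rule lagrange_foldr_eigen_sum[OF eig \<psi> s])
  also have "\<dots> = (\<Sum>y\<in>Y. if y = x then w y s else 0)"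
  proof (intro sum.cong refl)
    fix y assume "y \<in> Y"
    then have "y \<le> n div 2" using assms(2) by auto
    then show "(\<Prod>z\<leftarrow>filter (\<lambda>z. z \<noteq> x) [0..<Suc (n div 2)].
        (content_sum n y - content_sum n z) / (content_sum n x - content_sum n z)) * w y s
      = (if y = x then w y s else 0)"
      by (simp only: lagrange_basis_content_sum[OF assms(3)]) simp
  qed
  also have "\<dots> = (if x \<in> Y then w x s else 0)"
    using assms(1) by (rule sum.delta)
  finally show ?thesis .
qed

section \<open>Adding one qubit\<close>

lemma transp_eigen_ladder: "transp_eigen n c \<phi> \<Longrightarrow> transp_eigen n c (ladder b \<phi>)"
  unfolding transp_eigen_def
  by (auto simp: transp_sum_ladder ladder_scale[symmetric] intro: ladder_cong)

lemma in_weight_space_ladder: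
  assumes "in_weight_space n r \<phi>" "ladder b \<phi> s \<noteq> 0"
  shows "length s = n \<and> count_list s True + of_bool (\<not> b) = r + of_bool b"
proof -
  obtain p where p: "p \<in> positions s b" "\<phi> (s[p := \<not> b]) \<noteq> 0"
    using ladder_nonzero[OF assms(2)] by blast
  then have "length s = n" "count_list (s[p := \<not> b]) True = r"
    using assms(1) by (auto simp: in_weight_space_def)
  moreover have "int (count_list (s[p := \<not> b]) True) = int (count_list s True) - of_bool b + of_bool (\<not> b)"
    using p(1) count_list_update[of p s "\<not> b" True] by (auto simp: positions_def)
  ultimately show ?thesis by (cases b) auto
qed

definition bit_count :: "bool \<Rightarrow> nat \<Rightarrow> nat \<Rightarrow> real" where
  "bit_count b n r = (if b then real r else real n - real r)"

definition ladder_scalar :: "bool \<Rightarrow> nat \<Rightarrow> nat \<Rightarrow> real \<Rightarrow> real" where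
  "ladder_scalar b n r c =
     c - (real n * (real n - 1) / 2 - (real n - bit_count b n r) * bit_count b n r - (real n - bit_count b n r))"

lemma bit_count_eq: "count_list s True = r \<Longrightarrow> real (count_list s b) = bit_count b (length s) r"
  using count_le_length[of s True] by (cases b) (auto simp: bit_count_def count_list_False of_nat_diff)

lemma ladder_ladder_eigen:
  assumes "transp_eigen n c \<phi>" "in_weight_space n r \<phi>" "length s = n"
  shows "ladder (\<not> b) (ladder b \<phi>) s = ladder_scalar b n r c * \<phi> s"
proof (cases "\<phi> s = 0")
  case True
  then show ?thesis using ladder_ladder[OF assms(3), of b \<phi>] assms(1,3) by (simp add: transp_eigen_def)
next
  case False
  then have "count_list s True = r" using assms(2) by (simp add: in_weight_space_def)
  then have "real (count_list s b) = bit_count b n r" "real (count_list s (\<not> b)) = real n - bit_count b n r"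
    using bit_count_eq[of s r] assms(3) by (auto simp: bit_count_def)
  then have "ladder (\<not> b) (ladder b \<phi>) s = transp_sum n \<phi> s
      - (real n * (real n - 1) / 2 - (real n - bit_count b n r) * bit_count b n r - (real n - bit_count b n r)) * \<phi> s"
    using ladder_ladder[OF assms(3), of b \<phi>] by simp
  then show ?thesis
    using assms(1,3) by (simp add: transp_eigen_def ladder_scalar_def algebra_simps)
qed

text \<open>On the span of \<open>|b\<rangle> \<otimes> \<phi>\<close> and \<open>|\<not>b\<rangle> \<otimes> ladder b \<phi>\<close> the transposition sum acts by the
  matrix \<open>[[c + e, ladder_scalar], [1, c + n - e - 1]]\<close>, where \<open>e\<close> is the number of \<open>b\<close>'s.\<close>
lemma transp_sum_prepend_eigen:
  assumes "transp_eigen n c \<phi>" "in_weight_space n r \<phi>" "length s = Suc n"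
  shows "transp_sum (Suc n) (prepend b \<phi>) s
       = (c + bit_count b n r) * prepend b \<phi> s + prepend (\<not> b) (ladder b \<phi>) s"
proof -
  obtain h rest where s: "s = h # rest" and rest: "length rest = n"
    using assms(3) by (cases s) auto
  have "real (count_list rest b) * \<phi> rest = bit_count b n r * \<phi> rest"
    using assms(2) bit_count_eq[of rest r b] rest by (cases "\<phi> rest = 0") (auto simp: in_weight_space_def)
  then show ?thesis
    unfolding s transp_sum_prepend[OF rest] using assms(1) rest
    by (cases "h = b") (auto simp: transp_eigen_def prepend_def algebra_simps)
qed

lemma transp_sum_prepend_ladder_eigen:
  assumes "transp_eigen n c \<phi>" "in_weight_space n r \<phi>" "length s = Suc n"
  shows "transp_sum (Suc n) (prepend (\<not> b) (ladder b \<phi>)) s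
       = ladder_scalar b n r c * prepend b \<phi> s
         + (c + real n - bit_count b n r - 1) * prepend (\<not> b) (ladder b \<phi>) s"
proof -
  obtain h rest where s: "s = h # rest" and rest: "length rest = n"
    using assms(3) by (cases s) auto
  have "real (count_list rest (\<not> b)) * ladder b \<phi> rest = (real n - bit_count b n r - 1) * ladder b \<phi> rest"
  proof (cases "ladder b \<phi> rest = 0")
    case False
    then have "count_list rest True + of_bool (\<not> b) = r + of_bool b"
      using in_weight_space_ladder[OF assms(2)] by blast
    then show ?thesis
      using rest count_le_length[of rest True] by (cases b) (auto simp: bit_count_def count_list_False of_nat_diff)
  qed simp
  then show ?thesis
    unfolding s transp_sum_prepend[OF rest]
    using transp_eigen_ladder[OF assms(1), of b] ladder_ladder_eigen[OF assms(1,2) rest, of b] rest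
    by (cases "h = b") (auto simp: transp_eigen_def prepend_def algebra_simps)
qed

lemma content_sum_Suc_trace:
  "y \<le> n \<Longrightarrow> (content_sum n y + bit_count b n r) + (content_sum n y + real n - bit_count b n r - 1)
     = content_sum (Suc n) y + content_sum (Suc n) (Suc y)"
  by (simp add: content_sum_eq power2_eq_square field_simps)

lemma content_sum_Suc_det:
  "y \<le> n \<Longrightarrow> (content_sum n y + bit_count b n r - content_sum (Suc n) y)
       * (content_sum n y + bit_count b n r - content_sum (Suc n) (Suc y))
     + ladder_scalar b n r (content_sum n y) = 0"
  by (cases b) (simp_all add: content_sum_eq bit_count_def ladder_scalar_def power2_eq_square field_simps)

lemma content_sum_Suc_gap:
  assumes "2 * y \<le> n"
  shows "content_sum (Suc n) y - content_sum (Suc n) (Suc y) = real n + 1 - 2 * real y"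
    and "content_sum (Suc n) y \<noteq> content_sum (Suc n) (Suc y)"
proof -
  show gap: "content_sum (Suc n) y - content_sum (Suc n) (Suc y) = real n + 1 - 2 * real y"
    using content_sum_diff[of y "Suc n" "Suc y"] assms by simp
  then show "content_sum (Suc n) y \<noteq> content_sum (Suc n) (Suc y)"
    using assms by auto
qed

lemma eigenvector_2x2:
  fixes A B a d l c1 c2 :: real
  assumes "c1 \<noteq> c2" "a + d = c1 + c2" "(a - c1) * (a - c2) + l = 0"
  shows "((a - c2) / (c1 - c2)) * (a * A + B) + (1 / (c1 - c2)) * (l * A + d * B)
       = c1 * (((a - c2) / (c1 - c2)) * A + (1 / (c1 - c2)) * B)"
proof -
  have d: "d = c1 + c2 - a" and l: "l = - ((a - c1) * (a - c2))"
    using assms(2,3) by linarith+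
  show ?thesis unfolding d l using assms(1) by (simp add: field_simps)
qed

lemma eigenvector_2x2_sum:
  fixes A B a c1 c2 :: real
  assumes "c1 \<noteq> c2"
  shows "((a - c2) / (c1 - c2)) * A + (1 / (c1 - c2)) * B + (((a - c1) / (c2 - c1)) * A + (1 / (c2 - c1)) * B) = A"
proof -
  define D where "D = c1 - c2"
  have e: "c2 - c1 = - D" by (simp add: D_def)
  have "((a - c2) / (c1 - c2)) * A + (1 / (c1 - c2)) * B + (((a - c1) / (c2 - c1)) * A + (1 / (c2 - c1)) * B)
      = (((a - c2) * A + B) - ((a - c1) * A + B)) / D"
    unfolding e D_def[symmetric] by (simp add: diff_divide_distrib add_divide_distrib algebra_simps)
  also have "\<dots> = (D * A) / D" by (simp add: D_def algebra_simps)
  also have "\<dots> = A" using assms by (simp add: D_def)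
  finally show ?thesis .
qed

text \<open>The components of \<open>|b\<rangle> \<otimes> \<phi>\<close> along the two eigenvectors of this matrix;
  \<open>stay_weight\<close> and \<open>raise_weight\<close> are the squared Clebsch--Gordan coefficients.\<close>
definition stay_weight :: "bool \<Rightarrow> nat \<Rightarrow> nat \<Rightarrow> nat \<Rightarrow> real" where
  "stay_weight b n r y = (content_sum n y + bit_count b n r - content_sum (Suc n) (Suc y))
     / (content_sum (Suc n) y - content_sum (Suc n) (Suc y))"

definition raise_weight :: "bool \<Rightarrow> nat \<Rightarrow> nat \<Rightarrow> nat \<Rightarrow> real" where
  "raise_weight b n r y = (content_sum n y + bit_count b n r - content_sum (Suc n) y)
     / (content_sum (Suc n) (Suc y) - content_sum (Suc n) y)"

definition stay_part :: "bool \<Rightarrow> nat \<Rightarrow> nat \<Rightarrow> nat \<Rightarrow> qstate \<Rightarrow> qstate" where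
  "stay_part b n r y \<phi> = (\<lambda>s. stay_weight b n r y * prepend b \<phi> s
     + (1 / (content_sum (Suc n) y - content_sum (Suc n) (Suc y))) * prepend (\<not> b) (ladder b \<phi>) s)"

definition raise_part :: "bool \<Rightarrow> nat \<Rightarrow> nat \<Rightarrow> nat \<Rightarrow> qstate \<Rightarrow> qstate" where
  "raise_part b n r y \<phi> = (\<lambda>s. raise_weight b n r y * prepend b \<phi> s
     + (1 / (content_sum (Suc n) (Suc y) - content_sum (Suc n) y)) * prepend (\<not> b) (ladder b \<phi>) s)"

lemma transp_eigen_stay_raise_part:
  assumes "transp_eigen n (content_sum n y) \<phi>" "in_weight_space n r \<phi>" "2 * y \<le> n"
  shows "transp_eigen (Suc n) (content_sum (Suc n) y) (stay_part b n r y \<phi>)"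
    and "transp_eigen (Suc n) (content_sum (Suc n) (Suc y)) (raise_part b n r y \<phi>)"
proof -
  let ?c1 = "content_sum (Suc n) y" and ?c2 = "content_sum (Suc n) (Suc y)"
  let ?a = "content_sum n y + bit_count b n r"
  have trace: "?a + (content_sum n y + real n - bit_count b n r - 1) = ?c1 + ?c2"
    using content_sum_Suc_trace assms(3) by simp
  have det: "(?a - ?c1) * (?a - ?c2) + ladder_scalar b n r (content_sum n y) = 0"
    using content_sum_Suc_det assms(3) by simp
  have ne: "?c1 \<noteq> ?c2" using content_sum_Suc_gap(2)[OF assms(3)] .
  note T = transp_sum_prepend_eigen[OF assms(1,2)] transp_sum_prepend_ladder_eigen[OF assms(1,2)]
  show "transp_eigen (Suc n) ?c1 (stay_part b n r y \<phi>)"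
    unfolding transp_eigen_def
  proof (intro allI impI)
    fix s :: "bool list" assume s: "length s = Suc n"
    show "transp_sum (Suc n) (stay_part b n r y \<phi>) s = ?c1 * stay_part b n r y \<phi> s"
      unfolding stay_part_def stay_weight_def transp_sum_add transp_sum_scale T[OF s]
      using eigenvector_2x2[OF ne trace det] by simp
  qed
  show "transp_eigen (Suc n) ?c2 (raise_part b n r y \<phi>)"
    unfolding transp_eigen_def
  proof (intro allI impI)
    fix s :: "bool list" assume s: "length s = Suc n"
    have trace': "?a + (content_sum n y + real n - bit_count b n r - 1) = ?c2 + ?c1"
      using trace by simp
    have det': "(?a - ?c2) * (?a - ?c1) + ladder_scalar b n r (content_sum n y) = 0"
      using det by (simp add: mult.commute)
    show "transp_sum (Suc n) (raise_part b n r y \<phi>) s = ?c2 * raise_part b n r y \<phi> s"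
      unfolding raise_part_def raise_weight_def transp_sum_add transp_sum_scale T[OF s]
      using eigenvector_2x2[OF ne[symmetric] trace' det'] by simp
  qed
qed

lemma stay_part_add_raise_part:
  "2 * y \<le> n \<Longrightarrow> stay_part b n r y \<phi> s + raise_part b n r y \<phi> s = prepend b \<phi> s"
  unfolding stay_part_def raise_part_def stay_weight_def raise_weight_def
  by (rule eigenvector_2x2_sum) (rule content_sum_Suc_gap(2))

lemma stay_raise_part_zero [simp]:
  "stay_part b n r y (\<lambda>_. 0) = (\<lambda>_. 0)" "raise_part b n r y (\<lambda>_. 0) = (\<lambda>_. 0)"
  by (simp_all add: stay_part_def raise_part_def prepend_def ladder_def fun_eq_iff split: list.split)

lemma in_weight_space_prepend:
  assumes "in_weight_space n r \<phi>"
  shows "in_weight_space (Suc n) (r + of_bool b) (prepend b \<phi>)"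
    and "in_weight_space (Suc n) (r + of_bool b) (prepend (\<not> b) (ladder b \<phi>))"
proof -
  show "in_weight_space (Suc n) (r + of_bool b) (prepend b \<phi>)"
    using assms by (auto simp: in_weight_space_def prepend_def split: list.splits if_splits)
  show "in_weight_space (Suc n) (r + of_bool b) (prepend (\<not> b) (ladder b \<phi>))"
    unfolding in_weight_space_def
  proof (intro allI impI)
    fix s assume "prepend (\<not> b) (ladder b \<phi>) s \<noteq> 0"
    then obtain rest where s: "s = (\<not> b) # rest" and nonzero: "ladder b \<phi> rest \<noteq> 0"
      by (auto simp: prepend_def split: list.splits if_splits)
    from nonzero have "length rest = n \<and> count_list rest True + of_bool (\<not> b) = r + of_bool b"
      by (rule in_weight_space_ladder[OF assms])
    then show "length s = Suc n \<and> count_list s True = r + of_bool b"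
      unfolding s by (cases b) auto
  qed
qed

lemma in_weight_space_stay_raise_part:
  assumes "in_weight_space n r \<phi>"
  shows "in_weight_space (Suc n) (r + of_bool b) (stay_part b n r y \<phi>)"
    and "in_weight_space (Suc n) (r + of_bool b) (raise_part b n r y \<phi>)"
  unfolding stay_part_def raise_part_def
  by (intro in_weight_space_lincomb in_weight_space_prepend assms)+

lemma inner_q_prepend_stay_raise_part:
  "inner_q (Suc n) (prepend b \<psi>) (stay_part b n r y \<phi>) = stay_weight b n r y * inner_q n \<psi> \<phi>"
  "inner_q (Suc n) (prepend b \<psi>) (raise_part b n r y \<phi>) = raise_weight b n r y * inner_q n \<psi> \<phi>"
  unfolding stay_part_def raise_part_def by (rule inner_q_prepend)+

section \<open>Decomposition of \<open>\<Xi>\<close> into isotypic components\<close>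

primrec prepend_list :: "bool list \<Rightarrow> qstate \<Rightarrow> qstate" where
  "prepend_list [] D = D"
| "prepend_list (b # a) D = prepend b (prepend_list a D)"

fun exact_weight :: "nat \<Rightarrow> nat \<Rightarrow> bool list \<Rightarrow> nat \<Rightarrow> real" where
  "exact_weight N M [] y = of_bool (y = 0)"
| "exact_weight N M (b # a) y =
     stay_weight b (N + length a) (M + count_list a True) y * exact_weight N M a y
     + (if 0 < y then raise_weight b (N + length a) (M + count_list a True) (y - 1) * exact_weight N M a (y - 1)
        else 0)"

fun isotypic_part :: "nat \<Rightarrow> nat \<Rightarrow> qstate \<Rightarrow> bool list \<Rightarrow> nat \<Rightarrow> qstate" where
  "isotypic_part N M D [] y = (if y = 0 then D else (\<lambda>_. 0))"
| "isotypic_part N M D (b # a) y = (\<lambda>s.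
     stay_part b (N + length a) (M + count_list a True) y (isotypic_part N M D a y) s
     + (if 0 < y then raise_part b (N + length a) (M + count_list a True) (y - 1) (isotypic_part N M D a (y - 1)) s
        else 0))"

lemma exact_weight_eq_0: "length a < y \<Longrightarrow> exact_weight N M a y = 0"
  by (induction a arbitrary: y) auto

lemma isotypic_part_eq_0: "length a < y \<Longrightarrow> isotypic_part N M D a y = (\<lambda>_. 0)"
  by (induction a arbitrary: y) auto

lemma in_weight_space_isotypic_part:
  assumes "in_weight_space N M D"
  shows "in_weight_space (N + length a) (M + count_list a True) (isotypic_part N M D a y)"
proof (induction a arbitrary: y)
  case Nil
  then show ?case using assms by (simp add: in_weight_space_def)
next
  case (Cons b a)
  let ?n = "N + length a" and ?r = "M + count_list a True" and ?w = "isotypic_part N M D a"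
  have size: "N + length (b # a) = Suc ?n" "M + count_list (b # a) True = ?r + of_bool b"
    by simp_all
  note parts = in_weight_space_stay_raise_part[OF Cons.IH, where b = b]
  show ?case
  proof (cases y)
    case 0
    then have "isotypic_part N M D (b # a) y = stay_part b ?n ?r 0 (?w 0)" by simp
    then show ?thesis unfolding size by (simp only: parts(1))
  next
    case (Suc y')
    then have "isotypic_part N M D (b # a) y = (\<lambda>s. stay_part b ?n ?r y (?w y) s + raise_part b ?n ?r y' (?w y') s)"
      by simp
    then show ?thesis unfolding size by (simp only: in_weight_space_add[OF parts(1) parts(2)])
  qed
qed

lemma transp_eigen_isotypic_part:
  assumes "transp_eigen N (content_sum N 0) D" "in_weight_space N M D" "length a \<le> N"
  shows "transp_eigen (N + length a) (content_sum (N + length a) y) (isotypic_part N M D a y)"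
  using assms(3)
proof (induction a arbitrary: y)
  case Nil
  then show ?case using assms(1) by (simp add: transp_eigen_zero)
next
  case (Cons b a)
  let ?n = "N + length a" and ?r = "M + count_list a True" and ?w = "isotypic_part N M D a"
  have IH: "transp_eigen ?n (content_sum ?n z) (?w z)" for z
    using Cons by simp
  have stay: "transp_eigen (Suc ?n) (content_sum (Suc ?n) z) (stay_part b ?n ?r z (?w z))"
    and raise: "transp_eigen (Suc ?n) (content_sum (Suc ?n) (Suc z)) (raise_part b ?n ?r z (?w z))" for z
  proof -
    have "transp_eigen (Suc ?n) (content_sum (Suc ?n) z) (stay_part b ?n ?r z (?w z))
        \<and> transp_eigen (Suc ?n) (content_sum (Suc ?n) (Suc z)) (raise_part b ?n ?r z (?w z))"
    proof (cases "z \<le> length a")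
      case True
      then have "2 * z \<le> ?n" using Cons.prems by simp
      then show ?thesis
        using transp_eigen_stay_raise_part[OF IH in_weight_space_isotypic_part[OF assms(2)]] by blast
    qed (simp add: isotypic_part_eq_0 transp_eigen_zero)
    then show "transp_eigen (Suc ?n) (content_sum (Suc ?n) z) (stay_part b ?n ?r z (?w z))"
      and "transp_eigen (Suc ?n) (content_sum (Suc ?n) (Suc z)) (raise_part b ?n ?r z (?w z))"
      by blast+
  qed
  show ?case
  proof (cases y)
    case 0
    then show ?thesis using stay[of 0] by simp
  next
    case (Suc y')
    then show ?thesis using transp_eigen_add[OF stay[of "Suc y'"] raise[of y']] by simp
  qed
qed

lemma prepend_list_eq_sum_isotypic_part:
  assumes "length a \<le> N" "length s = N + length a"
  shows "prepend_list a D s = (\<Sum>y\<le>length a. isotypic_part N M D a y s)"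
  using assms
proof (induction a arbitrary: s)
  case Nil
  then show ?case by simp
next
  case (Cons b a)
  let ?n = "N + length a" and ?r = "M + count_list a True" and ?w = "isotypic_part N M D a"
  let ?stay = "\<lambda>y. stay_part b ?n ?r y (?w y) s" and ?raise = "\<lambda>y. raise_part b ?n ?r y (?w y) s"
  obtain h rest where s: "s = h # rest" and rest: "length rest = ?n"
    using Cons.prems(2) by (cases s) auto
  have "prepend_list (b # a) D s = (\<Sum>y\<le>length a. prepend b (?w y) s)"
    using Cons.IH[of rest] Cons.prems(1) rest by (simp add: s prepend_def)
  also have "\<dots> = (\<Sum>y\<le>length a. ?stay y + ?raise y)"
    using Cons.prems(1) by (intro sum.cong refl) (simp add: stay_part_add_raise_part)
  also have "\<dots> = (\<Sum>y\<le>Suc (length a). ?stay y) + (\<Sum>y\<le>Suc (length a). if 0 < y then ?raise (y - 1) else 0)"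
  proof -
    have "(\<Sum>y\<le>Suc (length a). ?stay y) = (\<Sum>y\<le>length a. ?stay y)"
      using isotypic_part_eq_0[of a "Suc (length a)" N M D] by simp
    moreover have "(\<Sum>y\<le>Suc (length a). if 0 < y then ?raise (y - 1) else 0) = (\<Sum>y\<le>length a. ?raise y)"
      by (simp only: sum.atMost_Suc_shift) simp
    ultimately show ?thesis by (simp only: sum.distrib)
  qed
  finally show ?case by (simp add: sum.distrib)
qed

lemma inner_q_isotypic_part:
  assumes "inner_q N D D = 1"
  shows "inner_q (N + length a) (prepend_list a D) (isotypic_part N M D a y) = exact_weight N M a y"
proof (induction a arbitrary: y)
  case Nil
  then show ?case using assms by (simp add: inner_q_def)
next
  case (Cons b a)
  then show ?case
    by (cases y) (simp_all add: inner_q_add inner_q_prepend_stay_raise_part)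
qed

lemma in_weight_space_dicke: "in_weight_space L M (dicke L M)"
  by (simp add: in_weight_space_def dicke_def)

lemma transp_eigen_dicke: "transp_eigen L (content_sum L 0) (dicke L M)"
  unfolding transp_eigen_def
proof (intro allI impI)
  fix t :: "bool list" assume t: "length t = L"
  have "transp_sum L (dicke L M) t = (\<Sum>(i, j)\<in>index_pairs L. dicke L M t)"
    unfolding transp_sum_index_pairs
  proof (intro sum.cong refl)
    fix p assume "p \<in> index_pairs L"
    then obtain i j where "p = (i, j)" "i < L" "j < L" by (auto simp: index_pairs_def)
    moreover have "count_list (t[i := t ! j, j := t ! i]) True = count_list t True" if "i < L" "j < L"
      using mset_swap[of j t i] that t by (simp flip: count_mset)
    ultimately show "(case p of (i, j) \<Rightarrow> swap_op i j (dicke L M) t) = (case p of (i, j) \<Rightarrow> dicke L M t)"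
      using t by (simp add: swap_op_def dicke_def)
  qed
  also have "\<dots> = content_sum L 0 * dicke L M t"
    by (simp add: card_index_pairs content_sum_eq power2_eq_square field_simps)
  finally show "transp_sum L (dicke L M) t = content_sum L 0 * dicke L M t" .
qed

lemma sum_basis_strings_count:
  "(\<Sum>s\<in>basis_strings L. of_bool (count_list s True = M)) = real (L choose M)"
proof (induction L arbitrary: M)
  case 0
  have "basis_strings 0 = {[]}" by (auto simp: basis_strings_def)
  then show ?case by simp
next
  case (Suc L)
  then show ?case
    by (cases M) (simp_all add: sum_basis_strings_Suc sum.distrib)
qed

lemma inner_q_dicke:
  assumes "M \<le> L"
  shows "inner_q L (dicke L M) (dicke L M) = 1"
proof -
  have pos: "real (L choose M) > 0" using assms by simp
  have "inner_q L (dicke L M) (dicke L M)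
      = (\<Sum>s\<in>basis_strings L. of_bool (count_list s True = M) / real (L choose M))"
    unfolding inner_q_def using pos by (intro sum.cong refl) (simp add: basis_strings_def dicke_def)
  also have "\<dots> = 1"
    using pos by (simp add: sum_divide_distrib[symmetric] sum_basis_strings_count)
  finally show ?thesis .
qed

lemma prepend_list_eq:
  "prepend_list a D s = (if take (length a) s = a then D (drop (length a) s) else 0)"
proof (induction a arbitrary: s)
  case (Cons b a)
  then show ?case by (cases s) (auto simp: prepend_def)
qed simp

lemma Xi_eq_prepend_list:
  assumes "l \<le> k" "k \<le> n"
  shows "Xi n m k l s = prepend_list (replicate l True @ replicate (k - l) False) (dicke (n - k) (m - l)) s"
proof -
  let ?a = "replicate l True @ replicate (k - l) False"
  have len: "length ?a = k" using assms by simp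
  have split: "take k s = take l s @ take (k - l) (drop l s)"
    using take_add[of l "k - l" s] assms by simp
  show ?thesis
  proof (cases "length s = n")
    case True
    then have "take k s = ?a
        \<longleftrightarrow> take l s = replicate l True \<and> take (k - l) (drop l s) = replicate (k - l) False"
      unfolding split using assms by (subst append_eq_append_conv) auto
    then show ?thesis unfolding prepend_list_eq len Xi_def using True assms by (simp add: dicke_def)
  next
    case False
    then show ?thesis unfolding prepend_list_eq len Xi_def using assms by (auto simp: dicke_def)
  qed
qed

lemma P_dist_eq_exact_weight:
  assumes "l \<le> k" "2 * k \<le> n" "l \<le> m" "m + k \<le> n + l"
  shows "P_dist n m k l x = exact_weight (n - k) (m - l) (replicate l True @ replicate (k - l) False) x"
proof -
  define a where "a = replicate l True @ replicate (k - l) False"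
  define D where "D = dicke (n - k) (m - l)"
  let ?w = "isotypic_part (n - k) (m - l) D a"
  have len: "length a = k" and n: "n - k + length a = n" and MN: "m - l \<le> n - k"
    using assms by (simp_all add: a_def)
  have eigen: "transp_eigen n (content_sum n y) (?w y)" for y
    using transp_eigen_isotypic_part[OF transp_eigen_dicke in_weight_space_dicke, of a "n - k"] assms
    by (simp add: D_def n len)
  have Xi: "Xi n m k l s = prepend_list a D s" for s
    using Xi_eq_prepend_list assms by (simp add: a_def D_def)
  show ?thesis
  proof (cases "x \<le> n div 2")
    case True
    have "isotypic_proj n x (Xi n m k l) s = (if x \<in> {..k} then ?w x s else 0)" if "length s = n" for s
    proof (rule isotypic_proj_eigen_sum)
      show "\<And>y. y \<in> {..k} \<Longrightarrow> transp_eigen n (content_sum n y) (?w y)"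
        by (rule eigen)
      show "\<And>s. length s = n \<Longrightarrow> Xi n m k l s = (\<Sum>y\<in>{..k}. ?w y s)"
        using prepend_list_eq_sum_isotypic_part[of a "n - k"] assms by (simp add: Xi n len atMost_def)
    qed (use True that assms in auto)
    then have proj: "isotypic_proj n x (Xi n m k l) s = ?w x s" if "length s = n" for s
      using that isotypic_part_eq_0[of a x] len by auto
    have "P_dist n m k l x = inner_q n (Xi n m k l) (isotypic_proj n x (Xi n m k l))"
      using True by (simp add: P_dist_def)
    also have "\<dots> = inner_q n (prepend_list a D) (?w x)"
      by (rule inner_q_cong) (simp_all add: Xi proj)
    also have "\<dots> = exact_weight (n - k) (m - l) a x"
      using inner_q_isotypic_part[OF inner_q_dicke[OF MN], of a "m - l" x] by (simp add: D_def n)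
    finally show ?thesis by (simp add: a_def)
  next
    case False
    then show ?thesis using exact_weight_eq_0[of a x] len assms by (simp add: a_def P_dist_def)
  qed
qed

section \<open>The error estimate\<close>

lemma stay_weight_eq:
  assumes "2 * y \<le> n"
  shows "stay_weight b n r y
       = (if b then real r - real y + 1 else real n + 1 - real y - real r) / (real n + 1 - 2 * real y)"
    and "raise_weight b n r y = 1 - stay_weight b n r y"
proof -
  have num: "content_sum n y + bit_count b n r - content_sum (Suc n) (Suc y)
      = (if b then real r - real y + 1 else real n + 1 - real y - real r)"
    using assms by (cases b) (simp_all add: bit_count_def content_sum_eq power2_eq_square algebra_simps)
  show "stay_weight b n r y
      = (if b then real r - real y + 1 else real n + 1 - real y - real r) / (real n + 1 - 2 * real y)"
    unfolding stay_weight_def num content_sum_Suc_gap(1)[OF assms] ..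
  define D where "D = content_sum (Suc n) y - content_sum (Suc n) (Suc y)"
  have "D \<noteq> 0" using content_sum_Suc_gap(2)[OF assms] by (simp add: D_def)
  moreover have e: "content_sum (Suc n) (Suc y) - content_sum (Suc n) y = - D"
    "content_sum n y + bit_count b n r - content_sum (Suc n) y
       = (content_sum n y + bit_count b n r - content_sum (Suc n) (Suc y)) - D"
    by (simp_all add: D_def)
  ultimately show "raise_weight b n r y = 1 - stay_weight b n r y"
    unfolding raise_weight_def stay_weight_def e D_def[symmetric] by (simp add: field_simps)
qed

text \<open>The numerator of \<open>stay_weight\<close> differs from \<open>1 - step_prob \<xi> b\<close> times its denominator by
  \<open>O(k)\<close>, while the denominator is at least \<open>n / 2\<close>.\<close>
lemma stay_weight_approx:
  fixes \<xi> :: real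
  assumes \<xi>: "0 \<le> \<xi>" "\<xi> \<le> 1" and "y \<le> t" "t < k" "c \<le> t" "l \<le> k" "4 * k \<le> N + k"
    and M: "real M = \<xi> * real (N + k) - real l"
  shows "\<bar>stay_weight b (N + t) (M + c) y - (1 - step_prob \<xi> b)\<bar> \<le> (10 * real k + 2) / real (N + k)"
proof -
  define D where "D = real (N + t) + 1 - 2 * real y"
  define Z where "Z = \<xi> * (real k - real t - 1)"
  define Y where "Y = \<xi> * real y"
  have bounds: "real l \<le> real k" "real c \<le> real t" "real t + 1 \<le> real k" "real y \<le> real t"
    using assms by auto
  have D_ge: "D \<ge> real (N + k) / 2" using assms unfolding D_def by simp
  then have D_pos: "D > 0" using assms by simp
  have "\<xi> * (real k - real t - 1) \<le> 1 * (real k - real t - 1)"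
    using \<xi> bounds by (intro mult_right_mono) auto
  then have Z: "0 \<le> Z" "Z \<le> real k" unfolding Z_def using \<xi> bounds by auto
  have Y: "0 \<le> Y" "Y \<le> real y" unfolding Y_def using \<xi> by (auto intro!: mult_left_le_one_le)
  have \<xi>D: "\<xi> * D = \<xi> * real (N + k) - Z - 2 * Y"
    unfolding D_def Z_def Y_def by (simp add: algebra_simps)
  define X where "X = (if b then real (M + c) - real y + 1 - \<xi> * D else real y - real (M + c) + \<xi> * D)"
  have "stay_weight b (N + t) (M + c) y - (1 - step_prob \<xi> b) = X / D"
    using stay_weight_eq(1)[of y "N + t" b "M + c"] assms D_pos
    by (cases b) (simp_all add: X_def D_def field_simps)
  moreover have "\<bar>X\<bar> \<le> 5 * real k + 1"
  proof (cases b)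
    case True
    then have "X = real M + real c - real y + 1 - \<xi> * D" by (simp add: X_def)
    then show ?thesis unfolding abs_le_iff using Z Y \<xi>D M bounds by (intro conjI) linarith+
  next
    case False
    then have "X = real y - real M - real c + \<xi> * D" by (simp add: X_def)
    then show ?thesis unfolding abs_le_iff using Z Y \<xi>D M bounds by (intro conjI) linarith+
  qed
  ultimately have "\<bar>stay_weight b (N + t) (M + c) y - (1 - step_prob \<xi> b)\<bar> \<le> (5 * real k + 1) / D"
    using D_pos by (simp add: divide_right_mono)
  also have "\<dots> \<le> (5 * real k + 1) / (real (N + k) / 2)"
    using D_ge assms by (intro divide_left_mono) auto
  finally show ?thesis by (simp add: field_simps)
qed

lemma abs_mult_diff_le:
  fixes A c q p E B :: real
  assumes "\<bar>A - c\<bar> \<le> B" "B \<le> 1" "0 \<le> c" "c \<le> 1" "\<bar>q - p\<bar> \<le> E" "0 \<le> p" "p \<le> 1"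
  shows "\<bar>A * q - c * p\<bar> \<le> 2 * E + B"
proof -
  have A: "\<bar>A\<bar> \<le> 2" using assms(1-4) by linarith
  have "\<bar>A * q - c * p\<bar> = \<bar>A * (q - p) + (A - c) * p\<bar>" by (simp add: algebra_simps)
  also have "\<dots> \<le> \<bar>A\<bar> * \<bar>q - p\<bar> + \<bar>A - c\<bar> * p"
    using abs_triangle_ineq[of "A * (q - p)" "(A - c) * p"] assms(6) by (simp add: abs_mult)
  also have "\<dots> \<le> 2 * E + B * 1"
    using assms A by (intro add_mono mult_mono) auto
  finally show ?thesis by simp
qed

lemma recursion_step_error:
  fixes q p u v :: "nat \<Rightarrow> real" and \<beta> E K :: real
  assumes "0 \<le> \<beta>" "\<beta> \<le> 1" "0 \<le> E" "0 \<le> K" "K \<le> 1"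
    and "\<And>z. \<bar>q z - p z\<bar> \<le> E" "\<And>z. 0 \<le> p z \<and> p z \<le> 1"
    and "\<And>z. (q z = 0 \<and> p z = 0) \<or> (\<bar>u z - (1 - \<beta>)\<bar> \<le> K \<and> \<bar>v z - \<beta>\<bar> \<le> K)"
  shows "\<bar>(u y * q y + (if 0 < y then v (y - 1) * q (y - 1) else 0))
          - ((1 - \<beta>) * p y + (if 0 < y then \<beta> * p (y - 1) else 0))\<bar> \<le> 4 * E + 2 * K"
proof -
  have terms: "\<bar>u z * q z - (1 - \<beta>) * p z\<bar> \<le> 2 * E + K \<and> \<bar>v z * q z - \<beta> * p z\<bar> \<le> 2 * E + K" for z
    using assms(8)[of z]
  proof
    assume "q z = 0 \<and> p z = 0"
    then show ?thesis using assms(3,4) by simp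
  next
    assume "\<bar>u z - (1 - \<beta>)\<bar> \<le> K \<and> \<bar>v z - \<beta>\<bar> \<le> K"
    then show ?thesis using assms(1-7) by (auto intro!: abs_mult_diff_le)
  qed
  show ?thesis
  proof (cases "0 < y")
    case True
    then show ?thesis using terms[of y] terms[of "y - 1"] by (simp add: abs_le_iff)
  next
    case False
    then show ?thesis using terms[of y] assms(3,4) by simp
  qed
qed

lemma exact_weight_approx:
  fixes \<xi> :: real
  assumes \<xi>: "0 \<le> \<xi>" "\<xi> \<le> 1" and "l \<le> k" "10 * k + 2 \<le> N + k" "length a \<le> k"
    and M: "real M = \<xi> * real (N + k) - real l"
  shows "\<bar>exact_weight N M a y - pmf (limit_pmf \<xi> a) y\<bar> \<le> (4 ^ length a - 1) * (10 * real k + 2) / real (N + k)"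
  using assms(5)
proof (induction a arbitrary: y)
  case Nil
  then show ?case by (simp add: pmf_return indicator_def)
next
  case (Cons b a)
  define t where "t = length a"
  define r where "r = M + count_list a True"
  define K where "K = (10 * real k + 2) / real (N + k)"
  define E where "E = (4 ^ t - 1) * (10 * real k + 2) / real (N + k)"
  let ?q = "exact_weight N M a" and ?p = "pmf (limit_pmf \<xi> a)" and ?\<beta> = "step_prob \<xi> b"
  have t: "t < k" using Cons.prems by (simp add: t_def)
  have K: "0 \<le> K" "K \<le> 1"
    using assms(4) by (auto simp: K_def field_simps)
  have "(1 :: real) \<le> 4 ^ t" by (simp add: one_le_power)
  then have E: "0 \<le> E"
    unfolding E_def by (intro divide_nonneg_nonneg mult_nonneg_nonneg) auto
  have IH: "\<bar>?q z - ?p z\<bar> \<le> E" for z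
    using Cons by (simp add: E_def t_def)
  have \<beta>: "0 \<le> ?\<beta>" "?\<beta> \<le> 1" using step_prob_range[OF \<xi>] by auto
  have weights: "(?q z = 0 \<and> ?p z = 0)
    \<or> (\<bar>stay_weight b (N + t) r z - (1 - ?\<beta>)\<bar> \<le> K \<and> \<bar>raise_weight b (N + t) r z - ?\<beta>\<bar> \<le> K)" for z
  proof (cases "z \<le> t")
    case True
    have stay: "\<bar>stay_weight b (N + t) r z - (1 - ?\<beta>)\<bar> \<le> K"
      unfolding K_def r_def
      by (rule stay_weight_approx[OF \<xi> True t _ assms(3) _ M]) (use assms(4) count_le_length in \<open>auto simp: t_def\<close>)
    moreover have "raise_weight b (N + t) r z - ?\<beta> = - (stay_weight b (N + t) r z - (1 - ?\<beta>))"
      using stay_weight_eq(2)[of z "N + t" b r] True t assms(4) by simp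
    ultimately show ?thesis by (simp only: abs_minus_cancel) simp
  next
    case False
    then show ?thesis using exact_weight_eq_0 pmf_limit_pmf_eq_0 by (auto simp: t_def)
  qed
  have "\<bar>exact_weight N M (b # a) y - pmf (limit_pmf \<xi> (b # a)) y\<bar> \<le> 4 * E + 2 * K"
    unfolding pmf_limit_pmf_Cons[OF \<xi>] exact_weight.simps(2) t_def[symmetric] r_def[symmetric]
    by (rule recursion_step_error[OF \<beta> E K IH _ weights]) (simp add: pmf_le_1)
  also have "\<dots> = (4 * 4 ^ t - 2) * (10 * real k + 2) / real (N + k)"
    unfolding E_def K_def by (simp add: add_divide_distrib[symmetric] algebra_simps)
  also have "\<dots> \<le> (4 ^ length (b # a) - 1) * (10 * real k + 2) / real (N + k)"
    by (intro divide_right_mono mult_right_mono) (auto simp: t_def)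
  finally show ?case .
qed

lemma P_dist_approx:
  fixes \<xi> :: real
  assumes "0 \<le> \<xi>" "\<xi> \<le> 1" "l \<le> k" "10 * k + 2 \<le> n" "real m = \<xi> * real n" "l \<le> m" "m + k \<le> n + l"
  shows "\<bar>P_dist n m k l x - pmf (P_R \<xi> k l) x\<bar> \<le> 4 ^ k * (10 * real k + 2) / real n"
proof -
  let ?a = "replicate l True @ replicate (k - l) False"
  have n: "n - k + k = n" and len: "length ?a = k" using assms by simp_all
  have "\<bar>P_dist n m k l x - pmf (P_R \<xi> k l) x\<bar> = \<bar>exact_weight (n - k) (m - l) ?a x - pmf (limit_pmf \<xi> ?a) x\<bar>"
    using assms by (simp add: P_dist_eq_exact_weight P_R_eq_limit_pmf)
  also have "\<dots> \<le> (4 ^ k - 1) * (10 * real k + 2) / real n"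
    using exact_weight_approx[of \<xi> l k "n - k" ?a "m - l" x] assms by (simp add: n len of_nat_diff)
  also have "\<dots> \<le> 4 ^ k * (10 * real k + 2) / real n"
    by (intro divide_right_mono mult_right_mono) auto
  finally show ?thesis .
qed

theorem theorem5p1:
  fixes k l :: nat and \<xi> :: real
  assumes "0 \<le> \<xi>" and "\<xi> \<le> 1" and "l \<le> k"
  shows "(\<exists>C N0. \<forall>n m x. n \<ge> N0 \<and> real m = \<xi> * real n \<and> k \<le> n \<and> l \<le> m \<and> m + k \<le> n + l
             \<longrightarrow> \<bar>P_dist n m k l x - pmf (P_R \<xi> k l) x\<bar> \<le> C / real n)
       \<and> set_pmf (P_R \<xi> k l) \<subseteq> {0..k}
       \<and> measure_pmf.expectation (P_R \<xi> k l) real = real (k - l) * \<xi> + real l * (1 - \<xi>)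
       \<and> measure_pmf.variance (P_R \<xi> k l) real = real k * \<xi> * (1 - \<xi>)"
proof -
  have "\<forall>n m x. n \<ge> 10 * k + 2 \<and> real m = \<xi> * real n \<and> k \<le> n \<and> l \<le> m \<and> m + k \<le> n + l
      \<longrightarrow> \<bar>P_dist n m k l x - pmf (P_R \<xi> k l) x\<bar> \<le> 4 ^ k * (10 * real k + 2) / real n"
    using P_dist_approx[OF assms] by blast
  then show ?thesis
    using P_R_support_mean_variance[OF assms] by blast
qed

end
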